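(* Let $n\ge1$, let $\mathbf{a},\mathbf{b}\in\{0,1\}^{n-1}$ and let $x,y\in\mathbb{Q}[t]$. Then in the total complex $\mathrm{Tot}(\mathcal{L}^{\mathbb{Q}}_{T^n}(\mathbb{Q}[t];\mathbb{Q}))$, in multi-degree $\mathbf{1}_n$, \[x_{(\mathbf{a},1)}\cdot y_{(\mathbf{b},1)}\sim x_{(\mathbf{a},0)}\cdot y_{(\mathbf{b},1)}+x_{(\mathbf{a},1)}\cdot y_{(\mathbf{b},0)}.\]
   Context: The $n$-chain complex $C=\mathcal{L}^{\mathbb{Q}}_{T^n}(\mathbb{Q}[t];\mathbb{Q})$: in multi-degree $\mathbf{V}=(v_1,\dots,v_n)\in\mathbb{N}^n$, $C_{\mathbf{V}}=\mathbb{Q}\otimes\bigotimes_{\mathbf{0}\neq\mathbf{v}\le\mathbf{V}}\mathbb{Q}[t]$ (tensors over $\mathbb{Q}$), i.e. elements are sums of "multi-matrices" of size $(v_1+1)\times\cdots\times(v_n+1)$ with entries in $\mathbb{Q}[t]$ at coordinates $\mathbf{v}\ne\mathbf{0}_n$ ($\mathbf{0}\le\mathbf{v}\le\mathbf{V}$ entrywise) and an entry in $\mathbb{Q}$ at $\mathbf{0}_n$, where $\mathbb{Q}$ is a $\mathbb{Q}[t]$-module via $t\mapsto0$. In direction $i$, the slices of a multi-matrix are indexed by the $i$th coordinate $j\in\{0,\dots,v_i\}$; the face map $d_{i,j}$ for $0\le j<v_i$ multiplies slice $j$ and slice $j+1$ entrywise into one slice, and $d_{i,v_i}$ multiplies slice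 $v_i$ entrywise into slice $0$ (the Hochschild face maps in each direction). Put $\mathrm{d}_i=\sum_{j=0}^{v_i}(-1)^jd_{i,j}$; the total complex $\mathrm{Tot}(C)$ has differential $\mathrm{d}=\sum_{i=1}^n(-1)^{v_1+\cdots+v_{i-1}}\mathrm{d}_i$ in component $\mathbf{V}$. We write $\mathbf{0}_m,\mathbf{1}_m$ for the constant vectors of length $m$. For $x\in\mathbb{Q}[t]$ and a coordinate $\mathbf{v}$, $x_{\mathbf{v}}$ is the multi-matrix with $x$ at $\mathbf{v}$ (its image in $\mathbb{Q}$ if $\mathbf{v}=\mathbf{0}$) and $1$ elsewhere; $x_{\mathbf{v}}\cdot y_{\mathbf{w}}$ is their product (entrywise), i.e. $x$ at $\mathbf{v}$, $y$ at $\mathbf{w}$ if $\mathbf{v}\neq\mathbf{w}$, and $xy$ at $\mathbf{v}$ if $\mathbf{v}=\mathbf{w}$. The relation $\sim$ means the two elements differ by a boundary in $\mathrm{Tot}(C)$. *)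

theory Defs
  imports "HOL-Computational_Algebra.Polynomial"
begin

text \<open>
Concrete model of the n-chain complex C = L_{T^n}(Q[t];Q).
A multi-degree V and a coordinate v are lists of naturals of length n.
The tensor product over Q of copies of Q[t] indexed by the nonzero coordinates
v <= V, tensored with Q at the zero coordinate, has as Q-basis the monomials:
exponent maps e :: nat list => nat supported on the nonzero coordinates v <= V
(the entry t^(e v) sits at coordinate v, the entry at the zero coordinate is 1).
An element of Tot(C) is a finitely supported function from pairs (V, e)
to rat, supported on valid pairs.
\<close>

definition coord_le :: "nat list \<Rightarrow> nat list \<Rightarrow> bool" where
  "coord_le v V \<longleftrightarrow> length v = length V \<and> (\<forall>k<length V. v ! k \<le> V ! k)"

definition valid_mono :: "nat \<Rightarrow> nat list \<Rightarrow> (nat list \<Rightarrow> nat) \<Rightarrow> bool" where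
  "valid_mono n V e \<longleftrightarrow> length V = n \<and>
     (\<forall>w. e w \<noteq> 0 \<longrightarrow> coord_le w V \<and> w \<noteq> replicate n 0)"

type_synonym tot = "nat list \<times> (nat list \<Rightarrow> nat) \<Rightarrow> rat"

definition is_chain :: "nat \<Rightarrow> tot \<Rightarrow> bool" where
  "is_chain n u \<longleftrightarrow> finite {p. u p \<noteq> 0} \<and> (\<forall>V e. u (V, e) \<noteq> 0 \<longrightarrow> valid_mono n V e)"

text \<open>Coordinate map of the face map d_{i,j} in direction i (0-based) from degree V:
 for j < V!i slices j and j+1 are merged; for j = V!i slice V!i is merged into slice 0.\<close>
definition merge_map :: "nat list \<Rightarrow> nat \<Rightarrow> nat \<Rightarrow> nat list \<Rightarrow> nat list" where
  "merge_map V i j v = v[i := (if j < V ! i then (if v ! i \<le> j then v ! i else v ! i - 1)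
                               else (if v ! i = V ! i then 0 else v ! i))]"

text \<open>Exponents add under entrywise multiplication of slices.\<close>
definition push_mono :: "(nat list \<Rightarrow> nat list) \<Rightarrow> (nat list \<Rightarrow> nat) \<Rightarrow> nat list \<Rightarrow> nat" where
  "push_mono \<phi> e w = (\<Sum>v\<in>{v. e v \<noteq> 0 \<and> \<phi> v = w}. e v)"

text \<open>Face map d_{i,j} on a basis monomial (V,e), as an element of Tot(C).
 If a positive power of t lands at the zero coordinate, the result is 0
 (Q is a Q[t]-module via t acting as 0).\<close>
definition face :: "nat \<Rightarrow> nat list \<Rightarrow> (nat list \<Rightarrow> nat) \<Rightarrow> nat \<Rightarrow> nat \<Rightarrow> tot" where
  "face n V e i j = (\<lambda>(W, f).
     if W = V[i := V ! i - 1] \<and> f = push_mono (merge_map V i j) e \<and> valid_mono n W f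
     then 1 else 0)"

definition dbasis :: "nat \<Rightarrow> nat list \<Rightarrow> (nat list \<Rightarrow> nat) \<Rightarrow> tot" where
  "dbasis n V e = (\<lambda>q. \<Sum>i<n. (-1::rat) ^ (\<Sum>k<i. V ! k) *
      (if V ! i = 0 then 0 else (\<Sum>j\<le>V ! i. (-1::rat) ^ j * face n V e i j q)))"

definition totd :: "nat \<Rightarrow> tot \<Rightarrow> tot" where
  "totd n u = (\<lambda>q. \<Sum>p\<in>{p. u p \<noteq> 0}. u p * dbasis n (fst p) (snd p) q)"

definition homologous :: "nat \<Rightarrow> tot \<Rightarrow> tot \<Rightarrow> bool" where
  "homologous n z w \<longleftrightarrow> (\<exists>u. is_chain n u \<and> (\<forall>q. z q - w q = totd n u q))"

text \<open>The element x_v * y_w in degree V: entry x at v, y at w (xy at v if v = w),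
 1 elsewhere; an entry at the zero coordinate is replaced by its image in Q.\<close>
definition prod2 :: "nat \<Rightarrow> nat list \<Rightarrow> nat list \<Rightarrow> rat poly \<Rightarrow> nat list \<Rightarrow> rat poly \<Rightarrow> tot" where
  "prod2 n V v x w y = (\<lambda>(W, e).
     if W = V \<and> valid_mono n V e then
       (if v = w then (if (\<forall>u. u \<noteq> v \<longrightarrow> e u = 0) then coeff (x * y) (e v) else 0)
        else (if (\<forall>u. u \<noteq> v \<and> u \<noteq> w \<longrightarrow> e u = 0) then coeff x (e v) * coeff y (e w) else 0))
     else 0)"

end

(*
  The bounding chain is x_(a,1) * y_(b,2) in multi-degree (1,...,1,2), up to the sign (-1)^n.
  In each of the first n - 1 directions the degree is 1 and both marked coordinates have
  entry 0 or 1, so the faces d_{i,0} and d_{i,1} coincide and cancel in d_i.  In the last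
  direction the faces d_{n,0}, d_{n,1}, d_{n,2} move the last entries (1, 2) of the two
  coordinates to (0, 1), (1, 1) and (1, 0), which yields
  x_(a,0) * y_(b,1) - x_(a,1) * y_(b,1) + x_(a,1) * y_(b,0) times (-1)^(n-1).
*)

theory Submission
  imports Defs
begin

definition basis_chain :: "nat \<Rightarrow> nat list \<Rightarrow> (nat list \<Rightarrow> nat) \<Rightarrow> tot" where
  "basis_chain n V e = (\<lambda>p. if p = (V, e) \<and> valid_mono n V e then 1 else 0)"

definition monomial2 :: "nat list \<Rightarrow> nat \<Rightarrow> nat list \<Rightarrow> nat \<Rightarrow> nat list \<Rightarrow> nat" where
  "monomial2 v i w j = (\<lambda>u. (if u = v then i else 0) + (if u = w then j else 0))"

lemma basis_chain_nonzeroD: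
  assumes "basis_chain n V e p \<noteq> 0"
  shows "p = (V, e)" and "valid_mono n V e"
  using assms by (auto simp: basis_chain_def split: if_splits)

lemma face_eq_basis_chain:
  "face n V e i j = basis_chain n (V[i := V ! i - 1]) (push_mono (merge_map V i j) e)"
  unfolding face_def basis_chain_def by (intro ext) (auto split: if_splits)

lemma push_mono_cong:
  assumes "\<And>u. e u \<noteq> 0 \<Longrightarrow> \<phi> u = \<psi> u"
  shows "push_mono \<phi> e = push_mono \<psi> e"
  unfolding push_mono_def using assms by (intro ext sum.cong) auto

lemma push_mono_monomial2:
  "push_mono \<phi> (monomial2 v i w j) = monomial2 (\<phi> v) i (\<phi> w) j"
proof
  fix z
  let ?e = "monomial2 v i w j"
  have "push_mono \<phi> ?e z = (\<Sum>u\<in>{u\<in>{v, w}. \<phi> u = z}. ?e u)"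
    unfolding push_mono_def
    by (rule sum.mono_neutral_left) (auto simp: monomial2_def split: if_splits)
  also have "\<dots> = (\<Sum>u\<in>{v, w}. if \<phi> u = z then ?e u else 0)"
    by (rule sum.inter_filter) simp
  also have "\<dots> = monomial2 (\<phi> v) i (\<phi> w) j z"
    by (cases "v = w") (auto simp: monomial2_def)
  finally show "push_mono \<phi> ?e z = monomial2 (\<phi> v) i (\<phi> w) j z" .
qed

lemma monomial2_eq_iff:
  "f = monomial2 v i w j \<longleftrightarrow>
     (\<forall>u. u \<noteq> v \<and> u \<noteq> w \<longrightarrow> f u = 0) \<and>
     (if v = w then f v = i + j else f v = i \<and> f w = j)"
  by (auto simp: monomial2_def fun_eq_iff)

lemma valid_mono_monomial2:
  assumes "length V = n" and "coord_le v V" and "coord_le w V"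
    and "v \<noteq> replicate n 0" and "w \<noteq> replicate n 0"
  shows "valid_mono n V (monomial2 v i w j)"
  using assms by (auto simp: valid_mono_def monomial2_def)

lemma coord_le_snoc:
  assumes "set c \<subseteq> {0, 1}" and "t \<le> s"
  shows "coord_le (c @ [t]) (replicate (length c) 1 @ [s])"
  unfolding coord_le_def
proof (intro conjI allI impI)
  fix k assume "k < length (replicate (length c) 1 @ [s])"
  then consider "k < length c" | "k = length c" by fastforce
  then show "(c @ [t]) ! k \<le> (replicate (length c) 1 @ [s]) ! k"
  proof cases
    case 1
    then have "c ! k \<in> {0, 1}" using assms(1) nth_mem by blast
    with 1 show ?thesis by (auto simp: nth_append)
  next
    case 2
    with assms(2) show ?thesis by (simp add: nth_append)
  qed
qed simp

text \<open>Both faces multiply slices 0 and 1 of direction k, only in opposite order; on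
  coordinates with k-th entry at most 1 they therefore agree.\<close>

lemma face_0_eq_face_1:
  assumes "valid_mono n V e" and "k < n" and "V ! k = 1"
  shows "face n V e k 0 = face n V e k 1"
proof -
  have "merge_map V k 0 u = merge_map V k 1 u" if "e u \<noteq> 0" for u
  proof -
    have "coord_le u V" and "length V = n"
      using assms(1) that unfolding valid_mono_def by auto
    then have "u ! k \<le> 1"
      using assms(2,3) unfolding coord_le_def by metis
    then show ?thesis using assms(3) by (auto simp: merge_map_def)
  qed
  then show ?thesis
    unfolding face_eq_basis_chain by (metis push_mono_cong)
qed

lemma dbasis_eq_last_direction:
  assumes "valid_mono (Suc L) V e" and "\<forall>k<L. V ! k = 1" and "V ! L > 0"
  shows "dbasis (Suc L) V e q = (-1) ^ L * (\<Sum>j\<le>V ! L. (-1) ^ j * face (Suc L) V e L j q)"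
proof -
  have "(\<Sum>j\<le>V ! k. (-1::rat) ^ j * face (Suc L) V e k j q) = 0" if "k < L" for k
  proof -
    have "{..V ! k} = {0, 1}" using assms(2) that by auto
    then show ?thesis using face_0_eq_face_1[OF assms(1)] assms(2) that by simp
  qed
  moreover have "(\<Sum>k<L. V ! k) = L"
    using assms(2) by simp
  ultimately show ?thesis
    using assms(2,3) unfolding dbasis_def by simp
qed

lemma merge_map_snoc:
  assumes "length c = L"
  shows "merge_map V L j (c @ [t]) =
    c @ [if j < V ! L then (if t \<le> j then t else t - 1) else (if t = V ! L then 0 else t)]"
  using assms[symmetric] by (simp add: merge_map_def list_update_append)

lemma valid_mono_monomial2_snoc:
  assumes "length a = L" and "length b = L" and "set a \<subseteq> {0, 1}" and "set b \<subseteq> {0, 1}"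
  shows "valid_mono (Suc L) (replicate L 1 @ [2]) (monomial2 (a @ [1]) i (b @ [2]) j)"
proof (rule valid_mono_monomial2)
  show "coord_le (a @ [1]) (replicate L 1 @ [2])" and "coord_le (b @ [2]) (replicate L 1 @ [2])"
    using assms coord_le_snoc[of a 1 2] coord_le_snoc[of b 2 2] by auto
  show "a @ [1] \<noteq> replicate (Suc L) 0" and "b @ [2] \<noteq> replicate (Suc L) 0"
    by (simp_all flip: replicate_append_same)
qed (simp add: assms)

lemma dbasis_monomial2_last_direction:
  assumes "length a = L" and "length b = L" and "set a \<subseteq> {0, 1}" and "set b \<subseteq> {0, 1}"
  shows "dbasis (Suc L) (replicate L 1 @ [2]) (monomial2 (a @ [1]) i (b @ [2]) j) q =
    (-1) ^ L * (basis_chain (Suc L) (replicate (Suc L) 1) (monomial2 (a @ [0]) i (b @ [1]) j) q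
              - basis_chain (Suc L) (replicate (Suc L) 1) (monomial2 (a @ [1]) i (b @ [1]) j) q
              + basis_chain (Suc L) (replicate (Suc L) 1) (monomial2 (a @ [1]) i (b @ [0]) j) q)"
proof -
  let ?V = "replicate L 1 @ [2::nat]" and ?e = "monomial2 (a @ [1]) i (b @ [2]) j"
  have "valid_mono (Suc L) ?V ?e"
    using assms by (rule valid_mono_monomial2_snoc)
  moreover have "\<forall>k<L. ?V ! k = 1" and "?V ! L = 2"
    using assms by (auto simp: nth_append)
  ultimately have "dbasis (Suc L) ?V ?e q =
      (-1) ^ L * (face (Suc L) ?V ?e L 0 q - face (Suc L) ?V ?e L 1 q + face (Suc L) ?V ?e L 2 q)"
    by (simp add: dbasis_eq_last_direction numeral_2_eq_2 atMost_Suc)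
  moreover have "?V[L := ?V ! L - 1] = replicate (Suc L) 1"
    using assms by (simp add: list_update_append nth_append replicate_append_same)
  ultimately show ?thesis
    using assms unfolding face_eq_basis_chain push_mono_monomial2
    by (simp add: merge_map_snoc nth_append)
qed

lemma coeff_mult_eq_box_sum:
  fixes x y :: "'a::comm_semiring_0 poly"
  shows "coeff (x * y) k =
    (\<Sum>(i, j)\<in>{..degree x} \<times> {..degree y}. if i + j = k then coeff x i * coeff y j else 0)"
proof -
  let ?B = "{..degree x} \<times> {..degree y}" and ?S = "{(i, j). i + j = k}"
  let ?c = "\<lambda>(i, j). coeff x i * coeff y j"
  have fin: "finite ?S"
    by (rule finite_subset[of _ "{..k} \<times> {..k}"]) auto
  have "(\<Sum>(i, j)\<in>?B. if i + j = k then coeff x i * coeff y j else 0) = sum ?c (?B \<inter> ?S)"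
    by (simp add: sum.inter_filter[symmetric] case_prod_beta Int_def conj_commute)
  also have "\<dots> = sum ?c ?S"
  proof (rule sum.mono_neutral_left[OF fin])
    show "\<forall>p\<in>?S - ?B \<inter> ?S. ?c p = 0"
    proof
      fix p assume "p \<in> ?S - ?B \<inter> ?S"
      then have "degree x < fst p \<or> degree y < snd p" by auto
      then show "?c p = 0" by (auto simp: coeff_eq_0 case_prod_beta)
    qed
  qed auto
  also have "?S = (\<lambda>i. (i, k - i)) ` {..k}"
    by (auto simp: image_iff)
  also have "sum ?c \<dots> = (\<Sum>i\<le>k. coeff x i * coeff y (k - i))"
    by (subst sum.reindex) (auto simp: inj_on_def)
  finally show ?thesis
    by (simp add: coeff_mult)
qed

lemma coeff_times_coeff_eq_box_sum:
  fixes x y :: "'a::comm_semiring_0 poly"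
  shows "coeff x k * coeff y l =
    (\<Sum>(i, j)\<in>{..degree x} \<times> {..degree y}. if (i, j) = (k, l) then coeff x i * coeff y j else 0)"
proof -
  let ?B = "{..degree x} \<times> {..degree y}"
  have "(\<Sum>(i, j)\<in>?B. if (i, j) = (k, l) then coeff x i * coeff y j else 0) =
      (\<Sum>p\<in>?B. if p = (k, l) then coeff x k * coeff y l else 0)"
    by (intro sum.cong) (auto split: if_splits)
  also have "\<dots> = coeff x k * coeff y l"
    by (auto simp: coeff_eq_0)
  finally show ?thesis ..
qed

lemma prod2_valid_eq_sum:
  assumes "valid_mono n V f"
  shows "prod2 n V v x w y (V, f) =
    (\<Sum>(i, j)\<in>{..degree x} \<times> {..degree y}. if f = monomial2 v i w j then coeff x i * coeff y j else 0)"
proof -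
  let ?supp = "\<forall>u. u \<noteq> v \<and> u \<noteq> w \<longrightarrow> f u = 0"
  consider "\<not> ?supp" | ?supp "v \<noteq> w" | ?supp "v = w"
    by blast
  then show ?thesis
  proof cases
    case 1
    then have "f \<noteq> monomial2 v i w j" for i j
      by (simp add: monomial2_eq_iff)
    moreover have "prod2 n V v x w y (V, f) = 0"
      using assms 1 by (cases "v = w") (auto simp: prod2_def)
    ultimately show ?thesis by simp
  next
    case 2
    then have "(f = monomial2 v i w j) = ((i, j) = (f v, f w))" for i j
      by (auto simp: monomial2_eq_iff)
    then show ?thesis
      using assms 2 by (simp add: prod2_def coeff_times_coeff_eq_box_sum)
  next
    case 3
    have "(f = monomial2 v i w j) = (i + j = f v)" for i j
      using 3 by (auto simp: monomial2_eq_iff)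
    then show ?thesis
      using assms 3 by (simp add: prod2_def coeff_mult_eq_box_sum)
  qed
qed

lemma prod2_eq_sum_basis_chain:
  "prod2 n V v x w y q =
    (\<Sum>(i, j)\<in>{..degree x} \<times> {..degree y}. coeff x i * coeff y j * basis_chain n V (monomial2 v i w j) q)"
proof -
  obtain W f where q: "q = (W, f)" by fastforce
  show ?thesis
  proof (cases "W = V \<and> valid_mono n V f")
    case True
    then show ?thesis
      by (auto simp: q prod2_valid_eq_sum basis_chain_def intro: sum.cong)
  next
    case False
    then have "basis_chain n V e q = 0" for e
      by (auto simp: q basis_chain_def)
    with False show ?thesis by (auto simp: q prod2_def)
  qed
qed

lemma totd_eq_sum_superset:
  assumes "finite P" and "\<And>p. u p \<noteq> 0 \<Longrightarrow> p \<in> P"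
  shows "totd n u q = (\<Sum>p\<in>P. u p * dbasis n (fst p) (snd p) q)"
  unfolding totd_def by (rule sum.mono_neutral_left) (use assms in auto)

lemma sum_basis_chain_nonzeroD:
  assumes "(\<Sum>k\<in>K. c k * basis_chain n (V k) (E k) p) \<noteq> 0"
  obtains k where "k \<in> K" and "p = (V k, E k)" and "valid_mono n (V k) (E k)"
proof -
  obtain k where "k \<in> K" and "c k * basis_chain n (V k) (E k) p \<noteq> 0"
    using sum.not_neutral_contains_not_neutral[OF assms] by blast
  then show ?thesis
    using basis_chain_nonzeroD that by (metis mult_zero_right)
qed

lemma is_chain_sum_basis_chain:
  assumes "finite K"
  shows "is_chain n (\<lambda>p. \<Sum>k\<in>K. c k * basis_chain n (V k) (E k) p)"
  unfolding is_chain_def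
proof
  let ?u = "\<lambda>p. \<Sum>k\<in>K. c k * basis_chain n (V k) (E k) p"
  have "{p. ?u p \<noteq> 0} \<subseteq> (\<lambda>k. (V k, E k)) ` K"
    by (auto elim: sum_basis_chain_nonzeroD)
  then show "finite {p. ?u p \<noteq> 0}"
    using assms finite_subset by blast
  show "\<forall>W f. ?u (W, f) \<noteq> 0 \<longrightarrow> valid_mono n W f"
  proof (intro allI impI)
    fix W f assume "?u (W, f) \<noteq> 0"
    then show "valid_mono n W f"
      by (rule sum_basis_chain_nonzeroD) simp
  qed
qed

lemma totd_sum_basis_chain:
  assumes "finite K" and "\<And>k. k \<in> K \<Longrightarrow> valid_mono n (V k) (E k)"
  shows "totd n (\<lambda>p. \<Sum>k\<in>K. c k * basis_chain n (V k) (E k) p) q =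
    (\<Sum>k\<in>K. c k * dbasis n (V k) (E k) q)"
proof -
  let ?P = "(\<lambda>k. (V k, E k)) ` K"
  let ?d = "\<lambda>p. dbasis n (fst p) (snd p) q"
  have "totd n (\<lambda>p. \<Sum>k\<in>K. c k * basis_chain n (V k) (E k) p) q =
      (\<Sum>p\<in>?P. (\<Sum>k\<in>K. c k * basis_chain n (V k) (E k) p) * ?d p)"
    by (rule totd_eq_sum_superset) (use assms(1) in \<open>auto elim: sum_basis_chain_nonzeroD\<close>)
  also have "\<dots> = (\<Sum>k\<in>K. c k * (\<Sum>p\<in>?P. basis_chain n (V k) (E k) p * ?d p))"
    by (simp add: sum_distrib_left sum_distrib_right sum.swap[of _ ?P] mult.assoc)
  also have "\<dots> = (\<Sum>k\<in>K. c k * dbasis n (V k) (E k) q)"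
  proof (intro sum.cong refl arg_cong2[where f = "(*)"])
    fix k assume "k \<in> K"
    then have "(\<Sum>p\<in>?P. basis_chain n (V k) (E k) p * ?d p) = (\<Sum>p\<in>?P. if p = (V k, E k) then ?d p else 0)"
      using assms(2) by (intro sum.cong) (auto simp: basis_chain_def)
    also have "\<dots> = dbasis n (V k) (E k) q"
      using \<open>k \<in> K\<close> assms(1) by simp
    finally show "(\<Sum>p\<in>?P. basis_chain n (V k) (E k) p * ?d p) = dbasis n (V k) (E k) q" .
  qed
  finally show ?thesis .
qed

lemma totd_scale: "totd n (\<lambda>p. c * u p) q = c * totd n u q"
proof (cases "c = 0")
  case False
  then have "{p. c * u p \<noteq> 0} = {p. u p \<noteq> 0}" by auto
  then show ?thesis
    unfolding totd_def by (simp add: sum_distrib_left mult.assoc)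
qed (simp add: totd_def)

lemma is_chain_scale: "is_chain n u \<Longrightarrow> is_chain n (\<lambda>p. c * u p)"
  unfolding is_chain_def by (auto elim: finite_subset[rotated])

lemma prod2_eq_sum_basis_chain_fun:
  "prod2 n V v x w y =
    (\<lambda>p. \<Sum>k\<in>{..degree x} \<times> {..degree y}.
       coeff x (fst k) * coeff y (snd k) * basis_chain n V (monomial2 v (fst k) w (snd k)) p)"
  by (rule ext) (simp add: prod2_eq_sum_basis_chain case_prod_unfold)

lemma is_chain_prod2: "is_chain n (prod2 n V v x w y)"
  unfolding prod2_eq_sum_basis_chain_fun by (rule is_chain_sum_basis_chain) simp

lemma totd_prod2:
  assumes "\<And>i j. valid_mono n V (monomial2 v i w j)"
  shows "totd n (prod2 n V v x w y) q =
    (\<Sum>(i, j)\<in>{..degree x} \<times> {..degree y}. coeff x i * coeff y j * dbasis n V (monomial2 v i w j) q)"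
  unfolding prod2_eq_sum_basis_chain_fun case_prod_unfold
  by (rule totd_sum_basis_chain) (simp_all add: assms)

lemma totd_prod2_snoc:
  assumes "length a = L" and "length b = L" and "set a \<subseteq> {0, 1}" and "set b \<subseteq> {0, 1}"
  shows "totd (Suc L) (prod2 (Suc L) (replicate L 1 @ [2]) (a @ [1]) x (b @ [2]) y) q =
    (-1) ^ L * (prod2 (Suc L) (replicate (Suc L) 1) (a @ [0]) x (b @ [1]) y q
              - prod2 (Suc L) (replicate (Suc L) 1) (a @ [1]) x (b @ [1]) y q
              + prod2 (Suc L) (replicate (Suc L) 1) (a @ [1]) x (b @ [0]) y q)"
  unfolding totd_prod2[OF valid_mono_monomial2_snoc[OF assms]]
    dbasis_monomial2_last_direction[OF assms] prod2_eq_sum_basis_chain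
  by (simp add: case_prod_unfold sum_distrib_left sum_subtractf sum.distrib algebra_simps)

theorem lemma4p6:
  fixes n :: nat and a b :: "nat list" and x y :: "rat poly"
  assumes "n \<ge> 1"
    and "length a = n - 1" and "length b = n - 1"
    and "set a \<subseteq> {0, 1}" and "set b \<subseteq> {0, 1}"
  shows "homologous n (prod2 n (replicate n 1) (a @ [1]) x (b @ [1]) y)
           (\<lambda>q. prod2 n (replicate n 1) (a @ [0]) x (b @ [1]) y q
              + prod2 n (replicate n 1) (a @ [1]) x (b @ [0]) y q)"
proof -
  obtain L where n: "n = Suc L"
    using assms(1) by (cases n) auto
  then have ab: "length a = L" "length b = L"
    using assms(2,3) by auto
  let ?u = "\<lambda>p. (-1) ^ n * prod2 n (replicate L 1 @ [2]) (a @ [1]) x (b @ [2]) y p"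
  have chain: "is_chain n ?u"
    by (intro is_chain_scale is_chain_prod2)
  have boundary: "totd n ?u q = prod2 n (replicate n 1) (a @ [1]) x (b @ [1]) y q
      - (prod2 n (replicate n 1) (a @ [0]) x (b @ [1]) y q + prod2 n (replicate n 1) (a @ [1]) x (b @ [0]) y q)"
    for q
  proof -
    have "(-1::rat) ^ Suc L * (-1) ^ L = -1"
      by (simp flip: power_mult_distrib)
    then show ?thesis
      unfolding totd_scale n totd_prod2_snoc[OF ab assms(4,5)] by (simp add: algebra_simps)
  qed
  show ?thesis
    unfolding homologous_def using chain boundary by (intro exI[of _ ?u]) simp
qed

end
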